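(* $P_2 < P_1$, i.e. $P_2\le P_1$ but not $P_1\le P_2$. Moreover, for every finite digraph $G$ with $G<P_1$ we have $G\le P_2$; that is, $P_2$ is the unique coatom (unique greatest lower bound of $P_1$) of $\mathfrak P_{\mathrm{Digraphs}}$.
   Context: A digraph is a pair $(V,E)$ with $E\subseteq V^2$. A homomorphism maps edges to edges; homomorphic equivalence means homomorphisms in both directions. A primitive positive formula is $\exists y_1,\dots,y_n(\psi_1\wedge\dots\wedge\psi_m)$ where each $\psi_i$ is $\bot$, $z_1=z_2$, or $E(z_1,z_2)$. For $H=(V,E)$, a pp power of dimension $d$ is the digraph on $V^d$ with edges $\{(u,v): \phi(u,v)\text{ holds in }H\}$ for a pp formula $\phi(x_1,\dots,x_d,y_1,\dots,y_d)$. $H\le G$ means $G$ is homomorphically equivalent to a pp power of $H$; $H<G$ means $H\le G$ and not $G\le H$; $\mathfrak P_{\mathrm{Digraphs}}$ is the poset of finite digraphs modulo mutual $\le$. $P_1$ is one vertex with no edges; $P_2$ has vertices $\{0,1\}$ and the single edge $(0,1)$. *)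

theory Defs
  imports Main
begin

type_synonym 'a digraph = "'a set \<times> ('a \<times> 'a) set"

definition finite_digraph :: "'a digraph \<Rightarrow> bool" where
  "finite_digraph G \<longleftrightarrow> finite (fst G) \<and> fst G \<noteq> {} \<and> snd G \<subseteq> fst G \<times> fst G"

definition is_hom :: "'a digraph \<Rightarrow> 'b digraph \<Rightarrow> ('a \<Rightarrow> 'b) \<Rightarrow> bool" where
  "is_hom G H f \<longleftrightarrow> (\<forall>x\<in>fst G. f x \<in> fst H) \<and> (\<forall>(x,y)\<in>snd G. (f x, f y) \<in> snd H)"

definition hom_equiv :: "'a digraph \<Rightarrow> 'b digraph \<Rightarrow> bool" where
  "hom_equiv G H \<longleftrightarrow> (\<exists>f. is_hom G H f) \<and> (\<exists>g. is_hom H G g)"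

text \<open>In a pp formula of dimension d, variables 0..d-1 are x_1..x_d,
  variables d..2d-1 are y_1..y_d, and all other variables are existentially quantified.\<close>
datatype atom = Bot | Eq nat nat | Edge nat nat

fun atom_holds :: "('a \<times> 'a) set \<Rightarrow> (nat \<Rightarrow> 'a) \<Rightarrow> atom \<Rightarrow> bool" where
  "atom_holds E s Bot = False"
| "atom_holds E s (Eq i j) = (s i = s j)"
| "atom_holds E s (Edge i j) = ((s i, s j) \<in> E)"

definition pp_power :: "'a digraph \<Rightarrow> nat \<Rightarrow> atom list \<Rightarrow> 'a list digraph" where
  "pp_power H d \<phi> =
     (let W = {u. length u = d \<and> set u \<subseteq> fst H} in
      (W, {(u, v). u \<in> W \<and> v \<in> W \<and>
             (\<exists>s. (\<forall>i. s i \<in> fst H) \<and> (\<forall>i<d. s i = u ! i \<and> s (d + i) = v ! i) \<and>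
                  (\<forall>a\<in>set \<phi>. atom_holds (snd H) s a))}))"

definition pp_le :: "'a digraph \<Rightarrow> 'b digraph \<Rightarrow> bool" where
  "pp_le H G \<longleftrightarrow> (\<exists>d \<phi>. d \<ge> 1 \<and> hom_equiv G (pp_power H d \<phi>))"

definition pp_less :: "'a digraph \<Rightarrow> 'b digraph \<Rightarrow> bool" where
  "pp_less H G \<longleftrightarrow> pp_le H G \<and> \<not> pp_le G H"

definition P1 :: "nat digraph" where "P1 = ({0}, {})"
definition P2 :: "nat digraph" where "P2 = ({0, 1}, {(0, 1)})"

end

theory Submission
  imports Defs
begin

text \<open>A digraph is above \<open>P1\<close> exactly when it is edgeless or has a loop: every pp-power
  of \<open>P1\<close> has a single vertex, and the two one-vertex digraphs realise the two cases.
  Hence \<open>G < P1\<close> means that \<open>G\<close> is loopless but has an edge. For such \<open>G\<close>, the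
  two-dimensional pp-power with \<open>(x\<^sub>1, x\<^sub>2) \<rightarrow> (y\<^sub>1, y\<^sub>2)\<close> iff \<open>E(x\<^sub>1, x\<^sub>2) \<and> y\<^sub>1 = y\<^sub>2\<close>
  only has edges from edges of \<open>G\<close> to diagonal pairs, which by looplessness are not edges;
  so it maps onto \<open>P2\<close> and contains a copy of it, i.e. \<open>G \<le> P2\<close>.\<close>

lemma fst_pp_power: "fst (pp_power H d \<phi>) = {u. length u = d \<and> set u \<subseteq> fst H}"
  by (simp add: pp_power_def Let_def)

lemma pp_power_edge_iff:
  "(u, v) \<in> snd (pp_power H d \<phi>) \<longleftrightarrow>
     u \<in> fst (pp_power H d \<phi>) \<and> v \<in> fst (pp_power H d \<phi>) \<and>
     (\<exists>s. (\<forall>i. s i \<in> fst H) \<and> (\<forall>i<d. s i = u ! i \<and> s (d + i) = v ! i) \<and>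
          (\<forall>a\<in>set \<phi>. atom_holds (snd H) s a))"
  by (simp add: pp_power_def Let_def)

lemma snd_pp_power_Bot: "snd (pp_power H d [Bot]) = {}"
  by (auto simp: pp_power_edge_iff)

lemma pp_leI: "d \<ge> 1 \<Longrightarrow> hom_equiv G (pp_power H d \<phi>) \<Longrightarrow> pp_le H G"
  unfolding pp_le_def by blast

lemma is_hom_const: "y \<in> fst H \<Longrightarrow> (\<forall>(x, x') \<in> snd G. (y, y) \<in> snd H) \<Longrightarrow> is_hom G H (\<lambda>_. y)"
  by (simp add: is_hom_def)

lemma hom_equiv_edgeless:
  assumes "snd G = {}" "snd H = {}" "fst G \<noteq> {}" "fst H \<noteq> {}"
  shows "hom_equiv G H"
proof -
  obtain x y where "x \<in> fst G" "y \<in> fst H" using assms(3,4) by blast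
  then have "is_hom G H (\<lambda>_. y)" "is_hom H G (\<lambda>_. x)"
    using assms(1,2) by (simp_all add: is_hom_const)
  then show ?thesis unfolding hom_equiv_def by blast
qed

lemma pp_le_edgeless:
  assumes "fst H \<noteq> {}" "snd G = {}" "fst G \<noteq> {}"
  shows "pp_le H G"
proof (rule pp_leI)
  obtain h where "h \<in> fst H" using assms(1) by blast
  then have "[h] \<in> fst (pp_power H 1 [Bot])" by (simp add: fst_pp_power)
  then show "hom_equiv G (pp_power H 1 [Bot])"
    using assms(2,3) by (intro hom_equiv_edgeless snd_pp_power_Bot) auto
qed simp

lemma pp_le_P1_if_loop:
  assumes "(x, x) \<in> snd G" "x \<in> fst G"
  shows "pp_le P1 G"
proof (rule pp_leI)
  have "[0] \<in> fst (pp_power P1 1 [])" by (simp add: fst_pp_power P1_def)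
  moreover have "([0], [0]) \<in> snd (pp_power P1 1 [])"
    by (auto simp: pp_power_edge_iff fst_pp_power P1_def intro: exI[of _ "\<lambda>_. 0"])
  ultimately have "is_hom G (pp_power P1 1 []) (\<lambda>_. [0])"
    by (simp add: is_hom_const)
  moreover have "is_hom (pp_power P1 1 []) G (\<lambda>_. x)"
    using assms by (simp add: is_hom_const)
  ultimately show "hom_equiv G (pp_power P1 1 [])"
    unfolding hom_equiv_def by blast
qed simp

lemma fst_pp_power_P1: "fst (pp_power P1 d \<phi>) = {replicate d 0}"
  by (auto simp: fst_pp_power P1_def intro: replicate_length_same[symmetric])

lemma has_loop_if_pp_le_P1:
  assumes "pp_le P1 G" "(a, b) \<in> snd G"
  shows "\<exists>x. (x, x) \<in> snd G"
proof -
  obtain d \<phi> f g where f: "is_hom G (pp_power P1 d \<phi>) f" and g: "is_hom (pp_power P1 d \<phi>) G g"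
    using assms(1) unfolding pp_le_def hom_equiv_def by blast
  \<comment> \<open>the only vertex of the pp-power is \<open>replicate d 0\<close>, so the image of \<open>(a, b)\<close> is a loop\<close>
  have "(f a, f b) \<in> snd (pp_power P1 d \<phi>)" using f assms(2) by (auto simp: is_hom_def)
  then have "(replicate d 0, replicate d 0) \<in> snd (pp_power P1 d \<phi>)"
    by (metis fst_pp_power_P1 pp_power_edge_iff singletonD)
  then show ?thesis using g by (auto simp: is_hom_def)
qed

lemma pp_le_P1_iff:
  assumes "snd G \<subseteq> fst G \<times> fst G" "fst G \<noteq> {}"
  shows "pp_le P1 G \<longleftrightarrow> snd G = {} \<or> (\<exists>x. (x, x) \<in> snd G)"
proof
  assume "pp_le P1 G"
  then show "snd G = {} \<or> (\<exists>x. (x, x) \<in> snd G)"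
    using has_loop_if_pp_le_P1 by fast
next
  assume "snd G = {} \<or> (\<exists>x. (x, x) \<in> snd G)"
  then show "pp_le P1 G"
  proof
    assume "snd G = {}"
    then show ?thesis using assms(2) by (intro pp_le_edgeless) (simp_all add: P1_def)
  next
    assume "\<exists>x. (x, x) \<in> snd G"
    with assms(1) show ?thesis by (blast intro: pp_le_P1_if_loop)
  qed
qed

lemma pp_le_P2_if_loopless_edge:
  assumes edge: "(a, b) \<in> snd G" and "a \<in> fst G" "b \<in> fst G"
    and loopless: "\<forall>x. (x, x) \<notin> snd G"
  shows "pp_le G P2"
proof (rule pp_leI)
  define \<phi> where "\<phi> = [Edge 0 1, Eq 2 3]"
  let ?W = "pp_power G 2 \<phi>"
  have vertices: "[a, b] \<in> fst ?W" "[b, b] \<in> fst ?W"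
    using assms by (simp_all add: fst_pp_power)
  define s where "s i = (if i = 0 then a else b)" for i :: nat
  have "([a, b], [b, b]) \<in> snd ?W"
    unfolding pp_power_edge_iff
  proof (intro conjI vertices exI[of _ s] allI impI ballI)
    show "s i \<in> fst G" for i using assms by (simp add: s_def)
    show "s i = [a, b] ! i" "s (2 + i) = [b, b] ! i" if "i < 2" for i
      using that by (auto simp: s_def less_2_cases_iff)
    show "atom_holds (snd G) s x" if "x \<in> set \<phi>" for x
      using that edge by (auto simp: \<phi>_def s_def)
  qed
  then have to_power: "is_hom P2 ?W (\<lambda>i. if i = 0 then [a, b] else [b, b])"
    using vertices by (auto simp: is_hom_def P2_def)
  have edge_to_diagonal: "(u ! 0, u ! 1) \<in> snd G \<and> v ! 0 = v ! 1" if uv: "(u, v) \<in> snd ?W" for u v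
  proof -
    obtain t where t: "\<forall>i<2. t i = u ! i \<and> t (2 + i) = v ! i"
      and atoms: "\<forall>a\<in>set \<phi>. atom_holds (snd G) t a"
      using uv[unfolded pp_power_edge_iff, THEN conjunct2, THEN conjunct2] by blast
    have "u ! 0 = t 0" "u ! 1 = t 1" "v ! 0 = t 2" "v ! 1 = t 3"
      using t[rule_format, of 0] t[rule_format, of 1] by (simp_all add: numeral_3_eq_3)
    with atoms show ?thesis by (simp add: \<phi>_def)
  qed
  have "is_hom ?W P2 (\<lambda>u. if (u ! 0, u ! 1) \<in> snd G then 0 else 1)"
    unfolding is_hom_def P2_def using edge_to_diagonal loopless by auto
  with to_power show "hom_equiv P2 ?W"
    unfolding hom_equiv_def by blast
qed simp

theorem mainTheorem3:
  shows "pp_less P2 P1 \<and>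
         (\<forall>G :: 'g digraph. finite_digraph G \<and> pp_less G P1 \<longrightarrow> pp_le G P2)"
proof (intro conjI allI impI)
  have "pp_le P2 P1" by (rule pp_le_edgeless) (simp_all add: P1_def P2_def)
  moreover have "\<not> pp_le P1 P2" by (subst pp_le_P1_iff) (auto simp: P2_def)
  ultimately show "pp_less P2 P1" unfolding pp_less_def by blast
next
  fix G :: "'g digraph"
  assume "finite_digraph G \<and> pp_less G P1"
  then have sub: "snd G \<subseteq> fst G \<times> fst G" and "fst G \<noteq> {}" and "\<not> pp_le P1 G"
    unfolding finite_digraph_def pp_less_def by auto
  then have "snd G \<noteq> {}" and loopless: "\<forall>x. (x, x) \<notin> snd G"
    using pp_le_P1_iff by blast+
  then obtain a b where "(a, b) \<in> snd G" by auto
  with sub loopless show "pp_le G P2" by (blast intro: pp_le_P2_if_loopless_edge)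
qed

end
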